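(* For every $t\in[0,1)$ the operator $C_t\colon H(\mathbb{D})\to H(\mathbb{D})$ is continuous. Moreover, the set $\{C_t : t\in[0,1)\}$ is equicontinuous in $\mathcal{L}(H(\mathbb{D}))$.
   Context: $\mathbb{D}=\{z\in\mathbb{C}:|z|<1\}$ and $H(\mathbb{D})$ is the space of holomorphic functions on $\mathbb{D}$ endowed with the topology of uniform convergence on compact subsets of $\mathbb{D}$ (a Fréchet space). $\mathcal{L}(H(\mathbb{D}))$ denotes the continuous linear operators on $H(\mathbb{D})$. For $t\in[0,1]$ the generalized Cesàro operator $C_t$ is defined on $f\in H(\mathbb{D})$ by $C_tf(0)=f(0)$ and $C_tf(z)=\frac{1}{z}\int_0^z\frac{f(\xi)}{1-t\xi}\,d\xi$ for $z\in\mathbb{D}\setminus\{0\}$. *)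

theory Defs
  imports "HOL-Complex_Analysis.Complex_Analysis"
begin

abbreviation unit_disc :: "complex set" where
  "unit_disc \<equiv> ball 0 1"

text \<open>The space H(D): holomorphic functions on the disc. To obtain a faithful set of
  points (no junk values outside the disc), functions are normalised to be 0 off the disc.\<close>
definition HD :: "(complex \<Rightarrow> complex) set" where
  "HD = {f. f holomorphic_on unit_disc \<and> (\<forall>z. z \<notin> unit_disc \<longrightarrow> f z = 0)}"

definition HD_top :: "(complex \<Rightarrow> complex) topology" where
  "HD_top = topology_generated_by
     {{g \<in> HD. \<forall>z\<in>K. cmod (g z - f z) < e} | f K e.
        f \<in> HD \<and> compact K \<and> K \<subseteq> unit_disc \<and> e > 0}"

definition cesaro :: "real \<Rightarrow> (complex \<Rightarrow> complex) \<Rightarrow> (complex \<Rightarrow> complex)" where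
  "cesaro t f = (\<lambda>z. if z \<notin> unit_disc then 0
      else if z = 0 then f 0
      else (1 / z) * contour_integral (linepath 0 z) (\<lambda>\<xi>. f \<xi> / (1 - complex_of_real t * \<xi>)))"

definition equicontinuous_family ::
  "'a topology \<Rightarrow> 'a \<Rightarrow> ('i \<Rightarrow> 'a \<Rightarrow> 'a) \<Rightarrow> 'i set \<Rightarrow> bool" where
  "equicontinuous_family X z T I \<longleftrightarrow>
     (\<forall>V. (\<exists>W. openin X W \<and> z \<in> W \<and> W \<subseteq> V) \<longrightarrow>
        (\<exists>U. openin X U \<and> z \<in> U \<and> (\<forall>i\<in>I. T i ` U \<subseteq> V)))"

end

theory Submission
  imports Defs
begin

text \<open>Writing \<open>C\<^sub>t f z = \<integral>\<^sub>0\<^sup>1 f (s z) / (1 - t s z) ds\<close> and using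
  \<open>\<bar>1 - t s z\<bar> \<ge> 1 - \<bar>z\<bar>\<close>, one gets for every \<open>r < 1\<close> and all \<open>\<bar>t\<bar> \<le> 1\<close>
  \<open>sup\<^bsub>\<bar>z\<bar>\<le>r\<^esub> \<bar>C\<^sub>t f z\<bar> \<le> sup\<^bsub>\<bar>z\<bar>\<le>r\<^esub> \<bar>f z\<bar> / (1 - r)\<close>.
  The suprema over the closed discs \<open>\<bar>z\<bar> \<le> r\<close> generate the topology of \<open>H(D)\<close>, so by
  linearity this single estimate, uniform in \<open>t\<close>, gives continuity of each \<open>C\<^sub>t\<close> and
  equicontinuity of the family.\<close>

lemma HD_imp_holomorphic_on: "f \<in> HD \<Longrightarrow> f holomorphic_on unit_disc"
  by (simp add: HD_def)

lemma HD_diff: "f \<in> HD \<Longrightarrow> g \<in> HD \<Longrightarrow> (\<lambda>z. f z - g z) \<in> HD"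
  by (auto simp: HD_def intro: holomorphic_intros)

lemma zero_in_HD: "(\<lambda>z. 0) \<in> HD"
  by (simp add: HD_def)

definition HD_nbhd :: "(complex \<Rightarrow> complex) \<Rightarrow> complex set \<Rightarrow> real \<Rightarrow> (complex \<Rightarrow> complex) set" where
  "HD_nbhd f K e = {g \<in> HD. \<forall>z\<in>K. cmod (g z - f z) < e}"

lemma HD_nbhd_subset_HD: "HD_nbhd f K e \<subseteq> HD"
  by (auto simp: HD_nbhd_def)

lemma centre_in_HD_nbhd: "f \<in> HD \<Longrightarrow> e > 0 \<Longrightarrow> f \<in> HD_nbhd f K e"
  by (simp add: HD_nbhd_def)

lemma HD_nbhd_mono: "K \<subseteq> K' \<Longrightarrow> e' \<le> e \<Longrightarrow> HD_nbhd f K' e' \<subseteq> HD_nbhd f K e"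
  by (fastforce simp: HD_nbhd_def)

lemma HD_top_eq_generated_by_HD_nbhd:
  "HD_top = topology_generated_by
     {HD_nbhd f K e | f K e. f \<in> HD \<and> compact K \<and> K \<subseteq> unit_disc \<and> e > 0}"
  by (simp add: HD_top_def HD_nbhd_def)

lemma openin_HD_nbhd:
  assumes "f \<in> HD" "compact K" "K \<subseteq> unit_disc" "e > 0"
  shows "openin HD_top (HD_nbhd f K e)"
  unfolding HD_top_eq_generated_by_HD_nbhd
  by (rule topology_generated_by_Basis) (use assms in blast)

lemma topspace_HD_top: "topspace HD_top = HD"
  unfolding HD_top_eq_generated_by_HD_nbhd topology_generated_by_topspace
proof (intro antisym subsetI)
  fix f assume "f \<in> HD"
  then have "HD_nbhd f {} 1 \<in> {HD_nbhd f K e | f K e. f \<in> HD \<and> compact K \<and> K \<subseteq> unit_disc \<and> e > 0}"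
    by (intro CollectI exI[of _ f] exI[of _ "{}"] exI[of _ "1::real"]) simp
  moreover have "f \<in> HD_nbhd f {} 1"
    using \<open>f \<in> HD\<close> by (simp add: centre_in_HD_nbhd)
  ultimately show "f \<in> \<Union>{HD_nbhd f K e | f K e. f \<in> HD \<and> compact K \<and> K \<subseteq> unit_disc \<and> e > 0}"
    by blast
qed (use HD_nbhd_subset_HD in blast)

lemma HD_nbhd_shrink:
  assumes "g \<in> HD_nbhd f K e" "f \<in> HD" "compact K" "K \<subseteq> unit_disc"
  obtains d where "d > 0" "HD_nbhd g K d \<subseteq> HD_nbhd f K e"
proof (cases "K = {}")
  case True
  then show ?thesis using that[of 1] by (simp add: HD_nbhd_def)
next
  case False
  have g: "g \<in> HD" and gK: "\<forall>z\<in>K. cmod (g z - f z) < e"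
    using assms(1) by (auto simp: HD_nbhd_def)
  have "continuous_on K (\<lambda>z. cmod (g z - f z))"
    using g assms(2,4) by (intro continuous_intros holomorphic_on_imp_continuous_on
        holomorphic_on_subset[OF HD_imp_holomorphic_on])
  then obtain m where m: "m \<in> K" "\<forall>z\<in>K. cmod (g z - f z) \<le> cmod (g m - f m)"
    using continuous_attains_sup[OF assms(3) False] by blast
  have "HD_nbhd g K (e - cmod (g m - f m)) \<subseteq> HD_nbhd f K e"
  proof
    fix h assume h: "h \<in> HD_nbhd g K (e - cmod (g m - f m))"
    have "cmod (h z - f z) < e" if "z \<in> K" for z
    proof -
      have "cmod (h z - f z) \<le> cmod (h z - g z) + cmod (g z - f z)"
        using norm_triangle_ineq[of "h z - g z" "g z - f z"] by simp
      also have "\<dots> < e"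
        using h m that by (fastforce simp: HD_nbhd_def)
      finally show ?thesis .
    qed
    then show "h \<in> HD_nbhd f K e" using h by (simp add: HD_nbhd_def)
  qed
  moreover have "e - cmod (g m - f m) > 0" using gK m by auto
  ultimately show ?thesis using that by blast
qed

lemma compact_subset_ball_imp_cball_subset:
  fixes a :: "'a::metric_space"
  assumes "compact K" "K \<subseteq> ball a e"
  obtains r where "r < e" "K \<subseteq> cball a r"
proof (cases "K = {}")
  case True
  then show ?thesis using that[of "e - 1"] by simp
next
  case False
  obtain m where m: "m \<in> K" "\<forall>z\<in>K. dist a z \<le> dist a m"
    using continuous_attains_sup[OF assms(1) False continuous_on_dist[OF continuous_on_const continuous_on_id]]
    by blast
  then show ?thesis using that[of "dist a m"] assms(2) by (auto simp: subset_iff)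
qed

lemma HD_nbhd_contains_disc_nbhd:
  assumes "g \<in> HD_nbhd f K e" "f \<in> HD" "compact K" "K \<subseteq> unit_disc"
  obtains r d where "r < 1" "d > 0" "HD_nbhd g (cball 0 r) d \<subseteq> HD_nbhd f K e"
proof -
  obtain d where "d > 0" "HD_nbhd g K d \<subseteq> HD_nbhd f K e"
    using HD_nbhd_shrink[OF assms] .
  moreover obtain r where "r < 1" "K \<subseteq> cball 0 r"
    using compact_subset_ball_imp_cball_subset[OF assms(3,4)] .
  ultimately show ?thesis
    using that HD_nbhd_mono[of K "cball 0 r" d d g] by blast
qed

lemma openin_HD_top_imp_disc_nbhd:
  assumes "openin HD_top W"
  shows "\<forall>f\<in>W. \<exists>r d. r < 1 \<and> d > 0 \<and> HD_nbhd f (cball 0 r) d \<subseteq> W"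
    (is "\<forall>f\<in>W. ?local W f")
proof -
  have "generate_topology_on {HD_nbhd f K e | f K e.
      f \<in> HD \<and> compact K \<and> K \<subseteq> unit_disc \<and> e > 0} W"
    using assms unfolding HD_top_eq_generated_by_HD_nbhd by (rule openin_topology_generated_by)
  then show ?thesis
  proof induction
    case (Int A B)
    show ?case
    proof
      fix f assume f: "f \<in> A \<inter> B"
      obtain r1 d1 where r1: "r1 < 1" "d1 > 0" "HD_nbhd f (cball 0 r1) d1 \<subseteq> A"
        using f Int.IH(1) by blast
      obtain r2 d2 where r2: "r2 < 1" "d2 > 0" "HD_nbhd f (cball 0 r2) d2 \<subseteq> B"
        using f Int.IH(2) by blast
      have "HD_nbhd f (cball 0 (max r1 r2)) (min d1 d2) \<subseteq> HD_nbhd f (cball 0 r1) d1"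
        "HD_nbhd f (cball 0 (max r1 r2)) (min d1 d2) \<subseteq> HD_nbhd f (cball 0 r2) d2"
        by (intro HD_nbhd_mono subset_cball; simp)+
      then have "HD_nbhd f (cball 0 (max r1 r2)) (min d1 d2) \<subseteq> A \<inter> B"
        using r1(3) r2(3) by blast
      moreover have "max r1 r2 < 1" "min d1 d2 > 0"
        using r1 r2 by simp_all
      ultimately show "?local (A \<inter> B) f" by blast
    qed
  next
    case (UN \<K>)
    show ?case
    proof
      fix f assume "f \<in> \<Union>\<K>"
      then obtain A where "A \<in> \<K>" "f \<in> A" by blast
      then obtain r d where "r < 1" "d > 0" "HD_nbhd f (cball 0 r) d \<subseteq> A"
        using UN.IH by blast
      moreover have "A \<subseteq> \<Union>\<K>" using \<open>A \<in> \<K>\<close> by blast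
      ultimately show "?local (\<Union>\<K>) f" by (meson order_trans)
    qed
  next
    case (Basis S)
    then obtain f K e where "S = HD_nbhd f K e" "f \<in> HD" "compact K" "K \<subseteq> unit_disc"
      by blast
    then show ?case
      using HD_nbhd_contains_disc_nbhd by metis
  qed simp
qed

lemma openin_HD_top_iff:
  "openin HD_top W \<longleftrightarrow>
     W \<subseteq> HD \<and> (\<forall>f\<in>W. \<exists>r d. r < 1 \<and> d > 0 \<and> HD_nbhd f (cball 0 r) d \<subseteq> W)"
proof
  assume "openin HD_top W"
  then show "W \<subseteq> HD \<and> (\<forall>f\<in>W. \<exists>r d. r < 1 \<and> d > 0 \<and> HD_nbhd f (cball 0 r) d \<subseteq> W)"
    using openin_subset openin_HD_top_imp_disc_nbhd topspace_HD_top by metis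
next
  assume W: "W \<subseteq> HD \<and> (\<forall>f\<in>W. \<exists>r d. r < 1 \<and> d > 0 \<and> HD_nbhd f (cball 0 r) d \<subseteq> W)"
  show "openin HD_top W"
  proof (subst openin_subopen, intro ballI)
    fix f assume "f \<in> W"
    then obtain r d where "r < 1" "d > 0" "HD_nbhd f (cball 0 r) d \<subseteq> W"
      using W by blast
    moreover have "f \<in> HD" using \<open>f \<in> W\<close> W by blast
    ultimately show "\<exists>T. openin HD_top T \<and> f \<in> T \<and> T \<subseteq> W"
      by (intro exI[of _ "HD_nbhd f (cball 0 r) d"])
        (auto intro: openin_HD_nbhd centre_in_HD_nbhd)
  qed
qed

lemma norm_one_minus_mult_ge:
  fixes t :: real and \<xi> :: complex
  assumes "\<bar>t\<bar> \<le> 1"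
  shows "1 - norm \<xi> \<le> norm (1 - complex_of_real t * \<xi>)"
proof -
  have "norm (complex_of_real t * \<xi>) \<le> norm \<xi>"
    using assms by (simp add: norm_mult mult_left_le_one_le)
  then show ?thesis
    using norm_triangle_ineq2[of 1 "complex_of_real t * \<xi>"] by simp
qed

lemma cesaro_denominator_nonzero:
  "\<bar>t\<bar> \<le> 1 \<Longrightarrow> \<xi> \<in> unit_disc \<Longrightarrow> 1 - complex_of_real t * \<xi> \<noteq> 0"
  using norm_one_minus_mult_ge[of t \<xi>] by auto

lemma holomorphic_on_cesaro_integrand:
  "\<bar>t\<bar> \<le> 1 \<Longrightarrow> f \<in> HD \<Longrightarrow>
     (\<lambda>\<xi>. f \<xi> / (1 - complex_of_real t * \<xi>)) holomorphic_on unit_disc"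
  using cesaro_denominator_nonzero
  by (intro holomorphic_intros HD_imp_holomorphic_on) auto

lemma closed_segment_centre_subset_ball:
  fixes a :: "'a::real_normed_vector"
  shows "z \<in> ball a e \<Longrightarrow> closed_segment a z \<subseteq> ball a e"
  by (rule closed_segment_subset[OF _ _ convex_ball]) (auto intro: le_less_trans[OF zero_le_dist])

lemma closed_segment_centre_subset_cball:
  fixes a :: "'a::real_normed_vector"
  shows "z \<in> cball a e \<Longrightarrow> closed_segment a z \<subseteq> cball a e"
  by (rule closed_segment_subset[OF _ _ convex_cball]) (auto intro: order_trans[OF zero_le_dist])

lemma contour_integrable_cesaro_integrand:
  "\<bar>t\<bar> \<le> 1 \<Longrightarrow> f \<in> HD \<Longrightarrow> z \<in> unit_disc \<Longrightarrow>
     (\<lambda>\<xi>. f \<xi> / (1 - complex_of_real t * \<xi>)) contour_integrable_on linepath 0 z"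
  by (rule contour_integrable_holomorphic_simple[OF holomorphic_on_cesaro_integrand open_ball])
    (simp_all add: closed_segment_centre_subset_ball)

lemma cesaro_in_HD:
  assumes t: "\<bar>t\<bar> \<le> 1" and f: "f \<in> HD"
  shows "cesaro t f \<in> HD"
proof -
  define h where "h = (\<lambda>\<xi>. f \<xi> / (1 - complex_of_real t * \<xi>))"
  obtain G where G: "\<And>z. z \<in> unit_disc \<Longrightarrow> (G has_field_derivative h z) (at z)"
    using holomorphic_convex_primitive'[OF convex_ball open_ball
        holomorphic_on_cesaro_integrand[OF t f, folded h_def]]
    by (metis at_within_open open_ball)
  then have "G holomorphic_on unit_disc"
    using holomorphic_on_open open_ball by blast
  then have quotient: "(\<lambda>z. if z = 0 then deriv G 0 else (G z - G 0) / (z - 0)) holomorphic_on unit_disc"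
    by (rule pole_lemma_open) simp
  have "cesaro t f z = (if z = 0 then deriv G 0 else (G z - G 0) / (z - 0))"
    if z: "z \<in> unit_disc" for z
  proof -
    have "deriv G 0 = f 0"
      using DERIV_imp_deriv[OF G[of 0]] by (simp add: h_def)
    moreover have "(h has_contour_integral G z - G 0) (linepath 0 z)"
      using contour_integral_primitive[of unit_disc G h "linepath 0 z"] G z
      by (simp add: has_field_derivative_at_within closed_segment_centre_subset_ball)
    ultimately show ?thesis
      using z by (simp add: cesaro_def h_def contour_integral_unique)
  qed
  then have "cesaro t f holomorphic_on unit_disc"
    using holomorphic_transform[OF quotient] by metis
  then show ?thesis by (simp add: HD_def cesaro_def)
qed

lemma cesaro_diff:
  assumes "\<bar>t\<bar> \<le> 1" "f \<in> HD" "g \<in> HD"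
  shows "cesaro t (\<lambda>z. f z - g z) = (\<lambda>z. cesaro t f z - cesaro t g z)"
proof
  fix z
  show "cesaro t (\<lambda>z. f z - g z) z = cesaro t f z - cesaro t g z"
  proof (cases "z \<in> unit_disc")
    case True
    then show ?thesis
      using contour_integral_diff[OF contour_integrable_cesaro_integrand
          contour_integrable_cesaro_integrand] assms
      by (simp add: cesaro_def diff_divide_distrib right_diff_distrib)
  qed (simp add: cesaro_def)
qed

lemma cesaro_zero: "cesaro t (\<lambda>z. 0) = (\<lambda>z. 0)"
  by (simp add: cesaro_def fun_eq_iff)

lemma norm_cesaro_le:
  assumes t: "\<bar>t\<bar> \<le> 1" and f: "f \<in> HD" and r: "r < 1"
    and bound: "\<forall>w\<in>cball 0 r. norm (f w) \<le> e" and z: "z \<in> cball 0 r"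
  shows "norm (cesaro t f z) \<le> e / (1 - r)"
proof -
  have "norm z \<le> r" using z by simp
  then have "0 \<le> r" using norm_ge_zero order_trans by blast
  have "0 \<le> e" using bound \<open>0 \<le> r\<close> by (meson centre_in_cball norm_ge_zero order_trans)
  show ?thesis
  proof (cases "z = 0")
    case True
    have "norm (f 0) \<le> e" using bound \<open>0 \<le> r\<close> by simp
    also have "e \<le> e / (1 - r)" using \<open>0 \<le> e\<close> \<open>0 \<le> r\<close> r by (simp add: le_divide_eq mult_left_le)
    finally show ?thesis using True by (simp add: cesaro_def)
  next
    case False
    define h where "h = (\<lambda>\<xi>. f \<xi> / (1 - complex_of_real t * \<xi>))"
    have "z \<in> unit_disc" using z r by simp
    have "norm (h \<xi>) \<le> e / (1 - r)" if "\<xi> \<in> closed_segment 0 z" for \<xi>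
    proof -
      have "norm \<xi> \<le> r"
        using that closed_segment_centre_subset_cball[OF z] by auto
      then have "1 - r \<le> norm (1 - complex_of_real t * \<xi>)"
        using norm_one_minus_mult_ge[OF t, of \<xi>] by linarith
      then show ?thesis
        using bound \<open>norm \<xi> \<le> r\<close> r \<open>0 \<le> e\<close>
        by (auto simp: h_def norm_divide intro!: frac_le)
    qed
    then have "norm (contour_integral (linepath 0 z) h) \<le> e / (1 - r) * norm (z - 0)"
      using \<open>0 \<le> e\<close> r
      by (intro has_contour_integral_bound_linepath[OF has_contour_integral_integral
          [OF contour_integrable_cesaro_integrand[OF t f \<open>z \<in> unit_disc\<close>, folded h_def]]]) auto
    then show ?thesis
      using False \<open>z \<in> unit_disc\<close> by (simp add: cesaro_def h_def norm_divide divide_le_eq)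
  qed
qed

text \<open>The factor \<open>1/2\<close> turns the non-strict bound of \<open>norm_cesaro_le\<close> into the
  strict inequality defining \<open>HD_nbhd\<close>.\<close>
lemma cesaro_image_HD_nbhd_subset:
  assumes t: "\<bar>t\<bar> \<le> 1" and f: "f \<in> HD" and r: "r < 1" and d: "d > 0"
  shows "cesaro t ` HD_nbhd f (cball 0 r) ((1 - r) * d / 2) \<subseteq> HD_nbhd (cesaro t f) (cball 0 r) d"
proof
  fix y assume "y \<in> cesaro t ` HD_nbhd f (cball 0 r) ((1 - r) * d / 2)"
  then obtain g where g: "g \<in> HD" "\<forall>w\<in>cball 0 r. norm (g w - f w) < (1 - r) * d / 2"
    and y: "y = cesaro t g"
    by (auto simp: HD_nbhd_def)
  have "norm (cesaro t g z - cesaro t f z) < d" if "z \<in> cball 0 r" for z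
  proof -
    have "\<forall>w\<in>cball 0 r. norm (g w - f w) \<le> (1 - r) * d / 2"
      using g(2) less_imp_le by blast
    then have "norm (cesaro t (\<lambda>w. g w - f w) z) \<le> (1 - r) * d / 2 / (1 - r)"
      using norm_cesaro_le[OF t HD_diff[OF g(1) f] r _ that] by blast
    also have "\<dots> = d / 2" using r by (simp add: field_simps)
    also have "\<dots> < d" using d by simp
    finally show ?thesis by (simp add: cesaro_diff[OF t g(1) f])
  qed
  then show "y \<in> HD_nbhd (cesaro t f) (cball 0 r) d"
    using y cesaro_in_HD[OF t g(1)] by (simp add: HD_nbhd_def)
qed

lemma continuous_map_cesaro:
  assumes t: "\<bar>t\<bar> \<le> 1"
  shows "continuous_map HD_top HD_top (cesaro t)"
  unfolding continuous_map_def topspace_HD_top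
proof (intro conjI allI impI Pi_I)
  fix f assume "f \<in> HD"
  then show "cesaro t f \<in> HD" by (rule cesaro_in_HD[OF t])
next
  fix W assume W: "openin HD_top W"
  show "openin HD_top {f \<in> HD. cesaro t f \<in> W}"
    unfolding openin_HD_top_iff
  proof (intro conjI ballI)
    fix f assume f: "f \<in> {f \<in> HD. cesaro t f \<in> W}"
    then obtain r d where "r < 1" "d > 0" "HD_nbhd (cesaro t f) (cball 0 r) d \<subseteq> W"
      using W f unfolding openin_HD_top_iff by blast
    then have "cesaro t ` HD_nbhd f (cball 0 r) ((1 - r) * d / 2) \<subseteq> W"
      using cesaro_image_HD_nbhd_subset[OF t _ \<open>r < 1\<close> \<open>d > 0\<close>, of f] f by blast
    then have "HD_nbhd f (cball 0 r) ((1 - r) * d / 2) \<subseteq> {f \<in> HD. cesaro t f \<in> W}"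
      using HD_nbhd_subset_HD unfolding image_subset_iff by blast
    then show "\<exists>r d. r < 1 \<and> d > 0 \<and> HD_nbhd f (cball 0 r) d \<subseteq> {f \<in> HD. cesaro t f \<in> W}"
      using \<open>r < 1\<close> \<open>d > 0\<close> by (intro exI[of _ r] exI[of _ "(1 - r) * d / 2"]) simp
  qed blast
qed

lemma equicontinuous_family_subset:
  assumes "equicontinuous_family X z T I" "J \<subseteq> I"
  shows "equicontinuous_family X z T J"
  unfolding equicontinuous_family_def
proof (intro allI impI)
  fix V assume "\<exists>W. openin X W \<and> z \<in> W \<and> W \<subseteq> V"
  then obtain U where "openin X U" "z \<in> U" "\<forall>i\<in>I. T i ` U \<subseteq> V"
    using assms(1) unfolding equicontinuous_family_def by meson
  then show "\<exists>U. openin X U \<and> z \<in> U \<and> (\<forall>i\<in>J. T i ` U \<subseteq> V)"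
    using assms(2) by (meson subsetD)
qed

lemma equicontinuous_cesaro: "equicontinuous_family HD_top (\<lambda>z. 0) cesaro {t. \<bar>t\<bar> \<le> 1}"
  unfolding equicontinuous_family_def
proof (intro allI impI)
  fix V assume "\<exists>W. openin HD_top W \<and> (\<lambda>z. 0) \<in> W \<and> W \<subseteq> V"
  then obtain W where W: "openin HD_top W" "(\<lambda>z. 0) \<in> W" "W \<subseteq> V" by meson
  then obtain r d where r: "r < 1" and d: "d > 0" and "HD_nbhd (\<lambda>z. 0) (cball 0 r) d \<subseteq> W"
    unfolding openin_HD_top_iff by meson
  note \<open>HD_nbhd (\<lambda>z. 0) (cball 0 r) d \<subseteq> W\<close>
  also note \<open>W \<subseteq> V\<close>
  finally have V: "HD_nbhd (\<lambda>z. 0) (cball 0 r) d \<subseteq> V" .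
  define U where "U = HD_nbhd (\<lambda>z. 0) (cball 0 r) ((1 - r) * d / 2)"
  have "openin HD_top U"
    unfolding U_def using r d by (intro openin_HD_nbhd zero_in_HD compact_cball) auto
  moreover have "(\<lambda>z. 0) \<in> U"
    unfolding U_def using r d by (intro centre_in_HD_nbhd zero_in_HD) simp
  moreover have "cesaro t ` U \<subseteq> V" if "t \<in> {t. \<bar>t\<bar> \<le> 1}" for t
    using cesaro_image_HD_nbhd_subset[OF _ zero_in_HD r d, of t] that V
    unfolding U_def cesaro_zero by simp
  ultimately show "\<exists>U. openin HD_top U \<and> (\<lambda>z. 0) \<in> U \<and> (\<forall>t\<in>{t. \<bar>t\<bar> \<le> 1}. cesaro t ` U \<subseteq> V)"
    by meson
qed

theorem proposition2p1:
  shows "(\<forall>t\<in>{0..<1}. continuous_map HD_top HD_top (cesaro t))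
       \<and> equicontinuous_family HD_top (\<lambda>z. 0) cesaro {0..<1}"
proof
  show "\<forall>t\<in>{0..<1}. continuous_map HD_top HD_top (cesaro t)"
    by (auto intro: continuous_map_cesaro)
  show "equicontinuous_family HD_top (\<lambda>z. 0) cesaro {0..<1}"
    by (rule equicontinuous_family_subset[OF equicontinuous_cesaro]) auto
qed

end
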